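(* Let $G$ be a dense $K_4^3\cup e$-free $3$-graph on $[n]$ with $\lambda(G)>\frac{\sqrt3}{18}$, and let $\vec x$ be an optimum weight vector for $G$. Then for any two distinct vertices $a,b\in[n]$, $x_a+x_b\le\frac{3-\sqrt3}{3}$.
   Context: $K_4^3\cup e$ is the $3$-graph on $\{1,\dots,7\}$ with edges $\{123,124,134,234,567\}$. For a $3$-graph $G$ on $[n]$, $\lambda(G,\vec x)=\sum_{e\in E(G)}\prod_{i\in e}x_i$ and $\lambda(G)=\max\{\lambda(G,\vec x):\sum_ix_i=1,x_i\ge0\}$; an optimum weight vector is a maximizer. $G$ is dense if $\lambda(G')<\lambda(G)$ for every proper subgraph $G'$. *)

theory Defs
  imports Complex_Main
begin

definition is_3graph :: "nat set \<Rightarrow> nat set set \<Rightarrow> bool" where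
  "is_3graph V E \<longleftrightarrow> (\<forall>e\<in>E. card e = 3 \<and> e \<subseteq> V)"

definition lagr_poly :: "nat set set \<Rightarrow> (nat \<Rightarrow> real) \<Rightarrow> real" where
  "lagr_poly E x = (\<Sum>e\<in>E. \<Prod>i\<in>e. x i)"

definition feasible :: "nat set \<Rightarrow> (nat \<Rightarrow> real) \<Rightarrow> bool" where
  "feasible V x \<longleftrightarrow> (\<forall>i\<in>V. 0 \<le> x i) \<and> (\<Sum>i\<in>V. x i) = 1"

definition lagrangian :: "nat set \<Rightarrow> nat set set \<Rightarrow> real" where
  "lagrangian V E = Sup {lagr_poly E x | x. feasible V x \<and> (\<forall>i. i \<notin> V \<longrightarrow> x i = 0)}"

definition optimum_weight :: "nat set \<Rightarrow> nat set set \<Rightarrow> (nat \<Rightarrow> real) \<Rightarrow> bool" where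
  "optimum_weight V E x \<longleftrightarrow> feasible V x \<and> lagr_poly E x = lagrangian V E"

definition dense :: "nat set \<Rightarrow> nat set set \<Rightarrow> bool" where
  "dense V E \<longleftrightarrow> (\<forall>V' E'. V' \<subseteq> V \<and> E' \<subseteq> E \<and> is_3graph V' E' \<and> (V', E') \<noteq> (V, E)
      \<longrightarrow> lagrangian V' E' < lagrangian V E)"

definition K43e :: "nat set set" where
  "K43e = {{1,2,3},{1,2,4},{1,3,4},{2,3,4},{5,6,7}}"

definition K43e_free :: "nat set \<Rightarrow> nat set set \<Rightarrow> bool" where
  "K43e_free V E \<longleftrightarrow> \<not> (\<exists>f. inj_on f {1..7} \<and> f ` {1..7} \<subseteq> V \<and> (\<forall>e\<in>K43e. f ` e \<in> E))"

end

theory Submission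
  imports Defs
begin

text \<open>
  Write \<open>s = x\<^sub>a + x\<^sub>b\<close> and \<open>\<lambda>\<close> for the value of the Lagrange polynomial at the optimum.
  Shrinking a positive weight \<open>x\<^sub>a\<close> and rescaling back onto the simplex cannot increase
  the cubic form, which yields the first-order condition \<open>\<partial>\<^sub>a\<lambda> \<ge> 3\<lambda>\<close>. In
  \<open>x\<^sub>a \<partial>\<^sub>a\<lambda> + x\<^sub>b \<partial>\<^sub>b\<lambda>\<close> every edge is counted at most once, except the edges \<open>abc\<close>,
  which are counted twice; their total weight is at most \<open>x\<^sub>a x\<^sub>b (1 - s) \<le> s\<^sup>2 (1 - s) / 4\<close>.
  Hence \<open>3\<lambda>s \<le> \<lambda> + s\<^sup>2 (1 - s) / 4\<close>, and for \<open>\<lambda> > \<surd>3 / 18\<close> this cubic inequality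
  forces \<open>s \<le> 1 - \<surd>3 / 3\<close>.
\<close>

definition lagr_deriv :: "nat set set \<Rightarrow> (nat \<Rightarrow> real) \<Rightarrow> nat \<Rightarrow> real" where
  "lagr_deriv E x a = (\<Sum>e\<in>E. if a \<in> e then \<Prod>i\<in>e - {a}. x i else 0)"

definition codeg_weight :: "nat set set \<Rightarrow> (nat \<Rightarrow> real) \<Rightarrow> nat \<Rightarrow> nat \<Rightarrow> real" where
  "codeg_weight E x a b = (\<Sum>e\<in>E. if a \<in> e \<and> b \<in> e then \<Prod>i\<in>e - {a, b}. x i else 0)"

lemma is_3graph_finite_edges:
  assumes "is_3graph V E" "finite V"
  shows "finite E"
  using assms unfolding is_3graph_def by (meson Pow_iff finite_Pow_iff rev_finite_subset subsetI)

lemma is_3graph_edgeD: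
  assumes "is_3graph V E" "e \<in> E"
  shows "card e = 3" "finite e" "e \<subseteq> V"
  using assms unfolding is_3graph_def by (auto intro: card_ge_0_finite)

lemma feasible_le_1:
  assumes "feasible V x" "finite V" "i \<in> V"
  shows "x i \<le> 1"
proof -
  have "x i \<le> (\<Sum>j\<in>V. x j)"
    using assms unfolding feasible_def by (intro member_le_sum) auto
  then show ?thesis using assms(1) unfolding feasible_def by simp
qed

lemma feasible_sum_others:
  assumes "feasible V x" "finite V" "a \<in> V" "b \<in> V" "a \<noteq> b"
  shows "(\<Sum>i\<in>V - {a, b}. x i) = 1 - (x a + x b)"
  using assms sum_diff[of V "{a, b}" x] unfolding feasible_def by auto

lemma lagr_poly_nonneg:
  assumes "is_3graph V E" "\<forall>i\<in>V. 0 \<le> x i"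
  shows "0 \<le> lagr_poly E x"
  using assms is_3graph_edgeD(3)[OF assms(1)] unfolding lagr_poly_def
  by (intro sum_nonneg prod_nonneg) auto

lemma lagr_poly_le_card:
  assumes "is_3graph V E" "finite V" "feasible V x"
  shows "lagr_poly E x \<le> real (card E)"
proof -
  have "(\<Prod>i\<in>e. x i) \<le> 1" if "e \<in> E" for e
    using assms that is_3graph_edgeD(3)[OF assms(1)] feasible_le_1[OF assms(3,2)]
    unfolding feasible_def by (intro prod_le_1) auto
  then have "lagr_poly E x \<le> (\<Sum>e\<in>E. 1)"
    unfolding lagr_poly_def by (intro sum_mono)
  then show ?thesis by simp
qed

lemma lagr_poly_le_lagrangian:
  assumes "is_3graph V E" "finite V" "feasible V x" "\<forall>i. i \<notin> V \<longrightarrow> x i = 0"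
  shows "lagr_poly E x \<le> lagrangian V E"
  unfolding lagrangian_def
proof (rule cSup_upper)
  show "bdd_above {lagr_poly E y |y. feasible V y \<and> (\<forall>i. i \<notin> V \<longrightarrow> y i = 0)}"
    using lagr_poly_le_card[OF assms(1,2)] by (auto intro!: bdd_aboveI[where M = "real (card E)"])
qed (use assms in blast)

lemma lagr_poly_scale:
  assumes "is_3graph V E" "\<forall>i\<in>V. y i = c * x i"
  shows "lagr_poly E y = c ^ 3 * lagr_poly E x"
proof -
  have "(\<Prod>i\<in>e. y i) = c ^ 3 * (\<Prod>i\<in>e. x i)" if "e \<in> E" for e
  proof -
    have "(\<Prod>i\<in>e. y i) = (\<Prod>i\<in>e. c * x i)"
      using assms is_3graph_edgeD(3)[OF assms(1) that] by (intro prod.cong) auto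
    then show ?thesis using is_3graph_edgeD(1)[OF assms(1) that] by (simp add: prod.distrib)
  qed
  then show ?thesis unfolding lagr_poly_def by (simp add: sum_distrib_left)
qed

lemma lagr_poly_fun_upd:
  assumes "\<forall>e\<in>E. finite e"
  shows "lagr_poly E (x(a := x a + t)) = lagr_poly E x + t * lagr_deriv E x a"
proof -
  have "(\<Prod>i\<in>e. (x(a := x a + t)) i) = (\<Prod>i\<in>e. x i) + t * (if a \<in> e then \<Prod>i\<in>e - {a}. x i else 0)"
    if "e \<in> E" for e
  proof (cases "a \<in> e")
    case True
    have "(\<Prod>i\<in>e - {a}. (x(a := x a + t)) i) = (\<Prod>i\<in>e - {a}. x i)"
      by (rule prod.cong) auto
    then show ?thesis
      using True prod.remove[of e a "x(a := x a + t)"] prod.remove[of e a x] assms that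
      by (simp add: algebra_simps)
  next
    case False
    then show ?thesis by (auto intro!: prod.cong)
  qed
  then show ?thesis unfolding lagr_poly_def lagr_deriv_def
    by (simp add: sum.distrib sum_distrib_left)
qed

text \<open>Shrink \<open>x\<^sub>a\<close> by \<open>-t\<close> and rescale by \<open>1 / (1 + t)\<close> back onto the simplex.\<close>

lemma optimum_weight_shrink:
  assumes G: "is_3graph V E" and fin: "finite V" and opt: "optimum_weight V E x"
    and aV: "a \<in> V" and t: "- x a < t" "t < 0"
  shows "lagr_poly E x + t * lagr_deriv E x a \<le> lagr_poly E x * (1 + t) ^ 3"
proof -
  have fx: "feasible V x" and val: "lagr_poly E x = lagrangian V E"
    using opt unfolding optimum_weight_def by auto
  have pos: "0 < 1 + t" using t feasible_le_1[OF fx fin aV] by linarith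
  define z where "z = x(a := x a + t)"
  define y where "y = (\<lambda>i. if i \<in> V then z i / (1 + t) else 0)"
  have "(\<Sum>i\<in>V. z i) = (\<Sum>i\<in>V. x i) + t"
    using fin aV sum.remove[of V a z] sum.remove[of V a x] unfolding z_def by simp
  then have "(\<Sum>i\<in>V. y i) = 1"
    using fx pos unfolding feasible_def y_def by (simp add: sum_divide_distrib[symmetric])
  then have "feasible V y"
    using fx pos t unfolding feasible_def y_def z_def by auto
  then have "lagr_poly E y \<le> lagr_poly E x"
    using lagr_poly_le_lagrangian[OF G fin] val unfolding y_def by auto
  moreover have "lagr_poly E y = (1 / (1 + t)) ^ 3 * lagr_poly E z"
    using lagr_poly_scale[OF G] unfolding y_def by simp
  moreover have "lagr_poly E z = lagr_poly E x + t * lagr_deriv E x a"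
    unfolding z_def using lagr_poly_fun_upd is_3graph_edgeD(2)[OF G] by blast
  ultimately show ?thesis using pos by (simp add: field_simps)
qed

text \<open>Comparing one-sided derivatives at \<open>t = 0\<close> of both sides.\<close>

lemma three_le_of_cubic_bound:
  fixes P D c :: real
  assumes "0 \<le> P" "0 < c"
    and bound: "\<And>t. - c < t \<Longrightarrow> t < 0 \<Longrightarrow> P + t * D \<le> P * (1 + t) ^ 3"
  shows "3 * P \<le> D"
proof (rule field_le_epsilon)
  fix \<epsilon> :: real
  assume "0 < \<epsilon>"
  define t where "t = - min (c / 2) (\<epsilon> / (3 * P + 1))"
  have t: "- c < t" "t < 0" using assms \<open>0 < \<epsilon>\<close> unfolding t_def by auto
  have "t * D \<le> t * (P * (3 + 3 * t + t\<^sup>2))"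
    using bound[OF t] by (simp add: power3_eq_cube power2_eq_square algebra_simps)
  then have "P * (3 + 3 * t + t\<^sup>2) \<le> D"
    using t by (simp add: mult_le_cancel_left)
  moreover have "P * (3 + 3 * t) \<le> P * (3 + 3 * t + t\<^sup>2)"
    using \<open>0 \<le> P\<close> by (intro mult_left_mono) auto
  moreover have "- t \<le> \<epsilon> / (3 * P + 1)"
    unfolding t_def by simp
  then have "3 * P * (- t) \<le> 3 * P * (\<epsilon> / (3 * P + 1))"
    using \<open>0 \<le> P\<close> by (intro mult_left_mono) auto
  moreover have "3 * P * (\<epsilon> / (3 * P + 1)) \<le> \<epsilon>"
  proof -
    have "3 * P \<le> 3 * P + 1" by simp
    then have "3 * P / (3 * P + 1) \<le> 1" using \<open>0 \<le> P\<close> by simp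
    from mult_left_mono[OF this, of \<epsilon>] \<open>0 < \<epsilon>\<close> show ?thesis by (simp add: mult_ac)
  qed
  ultimately show "3 * P \<le> D + \<epsilon>" by (simp add: algebra_simps)
qed

lemma optimum_weight_lagr_deriv:
  assumes G: "is_3graph V E" and fin: "finite V" and opt: "optimum_weight V E x"
    and aV: "a \<in> V"
  shows "3 * lagr_poly E x * x a \<le> x a * lagr_deriv E x a"
proof (cases "x a = 0")
  case False
  have "0 \<le> lagr_poly E x"
    using lagr_poly_nonneg[OF G] opt unfolding optimum_weight_def feasible_def by blast
  moreover from False have "0 < x a"
    using opt aV unfolding optimum_weight_def feasible_def by force
  ultimately have "3 * lagr_poly E x \<le> lagr_deriv E x a"
    by (rule three_le_of_cubic_bound) (rule optimum_weight_shrink[OF G fin opt aV])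
  then show ?thesis using \<open>0 < x a\<close> by (simp add: mult.commute)
qed simp

lemma weighted_lagr_deriv_edge:
  fixes x :: "nat \<Rightarrow> real"
  assumes "finite e" "a \<noteq> b" "\<forall>i\<in>e. 0 \<le> x i"
  shows "x a * (if a \<in> e then \<Prod>i\<in>e - {a}. x i else 0) + x b * (if b \<in> e then \<Prod>i\<in>e - {b}. x i else 0)
    \<le> (\<Prod>i\<in>e. x i) + x a * x b * (if a \<in> e \<and> b \<in> e then \<Prod>i\<in>e - {a, b}. x i else 0)"
proof -
  have remove_a: "x a * (\<Prod>i\<in>e - {a}. x i) = (\<Prod>i\<in>e. x i)" if "a \<in> e"
    using prod.remove[of e a x] assms that by simp
  have remove_b: "x b * (\<Prod>i\<in>e - {b}. x i) = (\<Prod>i\<in>e. x i)" if "b \<in> e"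
    using prod.remove[of e b x] assms that by simp
  have remove_ab: "x a * x b * (\<Prod>i\<in>e - {a, b}. x i) = (\<Prod>i\<in>e. x i)" if "a \<in> e" "b \<in> e"
  proof -
    have "(\<Prod>i\<in>e - {a}. x i) = x b * (\<Prod>i\<in>e - {a} - {b}. x i)"
      using prod.remove[of "e - {a}" b x] assms that by simp
    moreover have "e - {a} - {b} = e - {a, b}" by auto
    ultimately show ?thesis using remove_a that by (simp add: mult.assoc)
  qed
  have "0 \<le> (\<Prod>i\<in>e. x i)" using assms by (intro prod_nonneg) auto
  then show ?thesis using remove_a remove_b remove_ab by auto
qed

lemma lagr_deriv_pair_le:
  assumes "\<forall>e\<in>E. finite e" "a \<noteq> b" "\<forall>e\<in>E. \<forall>i\<in>e. 0 \<le> x i"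
  shows "x a * lagr_deriv E x a + x b * lagr_deriv E x b \<le> lagr_poly E x + x a * x b * codeg_weight E x a b"
proof -
  have "x a * lagr_deriv E x a + x b * lagr_deriv E x b
      = (\<Sum>e\<in>E. x a * (if a \<in> e then \<Prod>i\<in>e - {a}. x i else 0) + x b * (if b \<in> e then \<Prod>i\<in>e - {b}. x i else 0))"
    unfolding lagr_deriv_def by (simp add: sum.distrib sum_distrib_left)
  also have "\<dots> \<le> (\<Sum>e\<in>E. (\<Prod>i\<in>e. x i) + x a * x b * (if a \<in> e \<and> b \<in> e then \<Prod>i\<in>e - {a, b}. x i else 0))"
    using assms by (intro sum_mono weighted_lagr_deriv_edge) auto
  also have "\<dots> = lagr_poly E x + x a * x b * codeg_weight E x a b"
    unfolding lagr_poly_def codeg_weight_def by (simp add: sum.distrib sum_distrib_left)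
  finally show ?thesis .
qed

lemma card3_containing_pair:
  assumes "card e = 3" "a \<in> e" "b \<in> e" "a \<noteq> b"
  obtains c where "c \<notin> {a, b}" "e = {a, b, c}"
proof -
  have "card (e - {a, b}) = Suc 0"
    using assms card_Diff_subset[of "{a, b}" e] by simp
  then obtain c where c: "e - {a, b} = {c}" by (auto simp: card_Suc_eq)
  then have "e = {a, b, c}" using assms(2,3) by blast
  with c that show thesis by blast
qed

lemma codeg_weight_le:
  assumes G: "is_3graph V E" and fin: "finite V" and nonneg: "\<forall>i\<in>V. 0 \<le> x i" and "a \<noteq> b"
  shows "codeg_weight E x a b \<le> (\<Sum>c\<in>V - {a, b}. x c)"
proof -
  define f where "f = (\<lambda>e. \<Prod>i\<in>e - {a, b}. x i)"
  define triple where "triple = (\<lambda>c. {a, b, c})"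
  have f_triple: "f (triple c) = x c" if "c \<notin> {a, b}" for c
    using that unfolding f_def triple_def by (simp add: insert_Diff_if)
  have pair_edges: "{e\<in>E. a \<in> e \<and> b \<in> e} \<subseteq> triple ` (V - {a, b})"
  proof
    fix e assume e: "e \<in> {e\<in>E. a \<in> e \<and> b \<in> e}"
    then obtain c where "c \<notin> {a, b}" "e = triple c"
      using card3_containing_pair[OF is_3graph_edgeD(1)[OF G] _ _ \<open>a \<noteq> b\<close>] unfolding triple_def by blast
    with e is_3graph_edgeD(3)[OF G] show "e \<in> triple ` (V - {a, b})" unfolding triple_def by auto
  qed
  have "codeg_weight E x a b = (\<Sum>e\<in>{e\<in>E. a \<in> e \<and> b \<in> e}. f e)"
    unfolding codeg_weight_def f_def
    using is_3graph_finite_edges[OF G fin] by (simp add: sum.inter_filter)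
  also have "\<dots> \<le> (\<Sum>e\<in>triple ` (V - {a, b}). f e)"
    using pair_edges fin f_triple nonneg unfolding triple_def by (intro sum_mono2) auto
  also have "\<dots> \<le> (\<Sum>c\<in>V - {a, b}. f (triple c))"
    using fin f_triple nonneg unfolding triple_def by (intro sum_image_le[unfolded comp_def]) auto
  also have "\<dots> = (\<Sum>c\<in>V - {a, b}. x c)"
    using f_triple by (intro sum.cong) auto
  finally show ?thesis .
qed

lemma pair_weight_le:
  fixes P u v :: real
  assumes "sqrt 3 / 18 < P" "0 \<le> u" "0 \<le> v" "u + v \<le> 1"
    and ineq: "3 * P * (u + v) \<le> P + u * v * (1 - (u + v))"
  shows "u + v \<le> (3 - sqrt 3) / 3"
proof (rule ccontr)
  define s where "s = u + v"
  define r where "r = sqrt 3"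
  assume "\<not> u + v \<le> (3 - sqrt 3) / 3"
  then have s_gt: "1 - r / 3 < s" unfolding s_def r_def by simp
  have r2: "r * r = 3" and "0 < r" unfolding r_def by simp_all
  have "r < 2" unfolding r_def using real_sqrt_less_iff[of 3 4] by simp
  have "s\<^sup>2 / 4 - u * v = (u - v)\<^sup>2 / 4"
    unfolding s_def by (simp add: power2_eq_square algebra_simps)
  then have "u * v \<le> s\<^sup>2 / 4" using zero_le_power2[of "u - v"] by linarith
  then have "u * v * (1 - s) \<le> s\<^sup>2 / 4 * (1 - s)"
    using assms(4) unfolding s_def by (intro mult_right_mono) auto
  then have "P * (3 * s - 1) \<le> s\<^sup>2 / 4 * (1 - s)"
    using ineq unfolding s_def by (simp add: algebra_simps)
  moreover have "r / 18 * (3 * s - 1) < P * (3 * s - 1)"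
    using assms(1) s_gt \<open>r < 2\<close> unfolding r_def by (intro mult_strict_right_mono) auto
  ultimately have "r / 18 * (3 * s - 1) - s\<^sup>2 / 4 * (1 - s) < 0" by linarith
  have cubic_neg: "9 * s ^ 3 - 9 * s\<^sup>2 + 6 * r * s - 2 * r < 0"
  proof -
    have "9 * s ^ 3 - 9 * s\<^sup>2 + 6 * r * s - 2 * r = 36 * (r / 18 * (3 * s - 1) - s\<^sup>2 / 4 * (1 - s))"
      by (simp add: power2_eq_square power3_eq_cube field_simps)
    also have "\<dots> < 0" using \<open>r / 18 * (3 * s - 1) - s\<^sup>2 / 4 * (1 - s) < 0\<close> by (rule mult_pos_neg[rotated]) simp
    finally show ?thesis .
  qed
  \<comment> \<open>\<open>1 - \<surd>3 / 3\<close> is the only real root of this cubic.\<close>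
  have "9 * s ^ 3 - 9 * s\<^sup>2 + 6 * r * s - 2 * r
      = (s - (1 - r / 3)) * ((3 * s - r / 2)\<^sup>2 + 3 * r + 3 - r * r / 4)"
    using r2 by (simp add: power2_eq_square power3_eq_cube algebra_simps)
  moreover have "0 < (s - (1 - r / 3)) * ((3 * s - r / 2)\<^sup>2 + 3 * r + 3 - r * r / 4)"
    using s_gt r2 \<open>0 < r\<close> zero_le_power2[of "3 * s - r / 2"] by (intro mult_pos_pos) linarith+
  ultimately show False using cubic_neg by linarith
qed

theorem claim5p4:
  fixes n :: nat and G :: "nat set set" and x :: "nat \<Rightarrow> real" and a b :: nat
  assumes "is_3graph {1..n} G"
    and "dense {1..n} G"
    and "K43e_free {1..n} G"
    and "lagrangian {1..n} G > sqrt 3 / 18"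
    and "optimum_weight {1..n} G x"
    and "a \<in> {1..n}" and "b \<in> {1..n}" and "a \<noteq> b"
  shows "x a + x b \<le> (3 - sqrt 3) / 3"
proof (rule pair_weight_le)
  let ?V = "{1..n}" and ?P = "lagr_poly G x"
  have fx: "feasible ?V x" and val: "?P = lagrangian ?V G"
    using assms(5) unfolding optimum_weight_def by auto
  then have nonneg: "\<forall>i\<in>?V. 0 \<le> x i" unfolding feasible_def by blast
  then have edge_nonneg: "\<forall>e\<in>G. \<forall>i\<in>e. 0 \<le> x i" using is_3graph_edgeD(3)[OF assms(1)] by blast
  show "sqrt 3 / 18 < ?P" using assms(4) val by simp
  show "0 \<le> x a" "0 \<le> x b" using nonneg assms(6,7) by auto
  have rest: "(\<Sum>i\<in>?V - {a, b}. x i) = 1 - (x a + x b)"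
    using feasible_sum_others[OF fx] assms(6-8) by simp
  then show "x a + x b \<le> 1" using nonneg sum_nonneg[of "?V - {a, b}" x] by simp
  have "3 * ?P * (x a + x b) \<le> x a * lagr_deriv G x a + x b * lagr_deriv G x b"
    using add_mono[OF optimum_weight_lagr_deriv[OF assms(1) _ assms(5) assms(6)]
        optimum_weight_lagr_deriv[OF assms(1) _ assms(5) assms(7)]]
    by (simp add: algebra_simps)
  also have "\<dots> \<le> ?P + x a * x b * codeg_weight G x a b"
    using lagr_deriv_pair_le is_3graph_edgeD(2)[OF assms(1)] edge_nonneg assms(8) by blast
  also have "\<dots> \<le> ?P + x a * x b * (1 - (x a + x b))"
    using codeg_weight_le[OF assms(1) _ nonneg assms(8)] rest nonneg assms(6,7)
    by (intro add_left_mono mult_left_mono) auto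
  finally show "3 * ?P * (x a + x b) \<le> ?P + x a * x b * (1 - (x a + x b))" .
qed

end
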